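(* Let $\mathfrak g$ be a semisimple Lie algebra over an algebraically closed field of characteristic $0$, $\sigma_1\ne\sigma_2$ commuting involutions of $\mathfrak g$, and $\mathfrak g_{ij}=\{x:\sigma_1(x)=(-1)^ix,\ \sigma_2(x)=(-1)^jx\}$ for $i,j\in\{0,1\}$. Put $\mathfrak m_{ij}=[\mathfrak g_{ij},\mathfrak g_{ij}]\subset\mathfrak g_{00}$ and let $\kappa$ be the Killing form of $\mathfrak g$. Suppose $\mathfrak g_{11}=0$. Then (i) $[\mathfrak m_{01},\mathfrak g_{10}]=[\mathfrak m_{10},\mathfrak g_{01}]=0$; (ii) $\kappa(\mathfrak m_{01},\mathfrak m_{10})=0$ and $\mathfrak m_{01}\cap\mathfrak m_{10}=\{0\}$; (iii) $\mathfrak m_{10}\oplus\mathfrak g_{10}$ and $\mathfrak m_{01}\oplus\mathfrak g_{01}$ are ideals of $\mathfrak g$ with zero intersection.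
   Context: $\mathfrak g=\operatorname{Lie}(G)$ with $G$ connected semisimple; involutions induced from $G$. *)

theory Defs
  imports Main "HOL-Computational_Algebra.Polynomial"
begin

definition alg_closed :: "'k::field itself \<Rightarrow> bool" where
  "alg_closed _ \<longleftrightarrow> (\<forall>p :: 'k poly. degree p > 0 \<longrightarrow> (\<exists>x. poly p x = 0))"

definition lie_algebra :: "('k::field \<Rightarrow> 'v::ab_group_add \<Rightarrow> 'v) \<Rightarrow> ('v \<Rightarrow> 'v \<Rightarrow> 'v) \<Rightarrow> bool" where
  "lie_algebra scale br \<longleftrightarrow>
     vector_space scale \<and>
     (\<forall>x y z. br (x + y) z = br x z + br y z) \<and>
     (\<forall>x y z. br x (y + z) = br x y + br x z) \<and>
     (\<forall>c x y. br (scale c x) y = scale c (br x y)) \<and>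
     (\<forall>c x y. br x (scale c y) = scale c (br x y)) \<and>
     (\<forall>x. br x x = 0) \<and>
     (\<forall>x y z. br x (br y z) + br y (br z x) + br z (br x y) = 0)"

definition fin_basis :: "('k::field \<Rightarrow> 'v::ab_group_add \<Rightarrow> 'v) \<Rightarrow> 'v set \<Rightarrow> bool" where
  "fin_basis scale B \<longleftrightarrow> finite B \<and> \<not> module.dependent scale B \<and> module.span scale B = UNIV"

definition finite_dim :: "('k::field \<Rightarrow> 'v::ab_group_add \<Rightarrow> 'v) \<Rightarrow> bool" where
  "finite_dim scale \<longleftrightarrow> (\<exists>B. fin_basis scale B)"

definition trace_lin :: "('k::field \<Rightarrow> 'v::ab_group_add \<Rightarrow> 'v) \<Rightarrow> ('v \<Rightarrow> 'v) \<Rightarrow> 'k" where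
  "trace_lin scale f = (let B = (SOME B. fin_basis scale B) in
      \<Sum>b\<in>B. module.representation scale B (f b) b)"

definition killing :: "('k::field \<Rightarrow> 'v::ab_group_add \<Rightarrow> 'v) \<Rightarrow> ('v \<Rightarrow> 'v \<Rightarrow> 'v) \<Rightarrow> 'v \<Rightarrow> 'v \<Rightarrow> 'k" where
  "killing scale br x y = trace_lin scale (\<lambda>z. br x (br y z))"

definition brk_set :: "('k::field \<Rightarrow> 'v::ab_group_add \<Rightarrow> 'v) \<Rightarrow> ('v \<Rightarrow> 'v \<Rightarrow> 'v) \<Rightarrow> 'v set \<Rightarrow> 'v set \<Rightarrow> 'v set" where
  "brk_set scale br A B = module.span scale {br a b | a b. a \<in> A \<and> b \<in> B}"

definition lie_ideal :: "('k::field \<Rightarrow> 'v::ab_group_add \<Rightarrow> 'v) \<Rightarrow> ('v \<Rightarrow> 'v \<Rightarrow> 'v) \<Rightarrow> 'v set \<Rightarrow> bool" where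
  "lie_ideal scale br I \<longleftrightarrow> module.subspace scale I \<and> (\<forall>x i. i \<in> I \<longrightarrow> br x i \<in> I)"

fun derived :: "('k::field \<Rightarrow> 'v::ab_group_add \<Rightarrow> 'v) \<Rightarrow> ('v \<Rightarrow> 'v \<Rightarrow> 'v) \<Rightarrow> 'v set \<Rightarrow> nat \<Rightarrow> 'v set" where
  "derived scale br I 0 = I"
| "derived scale br I (Suc n) = brk_set scale br (derived scale br I n) (derived scale br I n)"

definition solvable_set :: "('k::field \<Rightarrow> 'v::ab_group_add \<Rightarrow> 'v) \<Rightarrow> ('v \<Rightarrow> 'v \<Rightarrow> 'v) \<Rightarrow> 'v set \<Rightarrow> bool" where
  "solvable_set scale br I \<longleftrightarrow> (\<exists>n. derived scale br I n = {0})"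

definition semisimple :: "('k::field \<Rightarrow> 'v::ab_group_add \<Rightarrow> 'v) \<Rightarrow> ('v \<Rightarrow> 'v \<Rightarrow> 'v) \<Rightarrow> bool" where
  "semisimple scale br \<longleftrightarrow> lie_algebra scale br \<and> finite_dim scale \<and>
     (\<forall>I. lie_ideal scale br I \<and> solvable_set scale br I \<longrightarrow> I = {0})"

definition lie_involution :: "('k::field \<Rightarrow> 'v::ab_group_add \<Rightarrow> 'v) \<Rightarrow> ('v \<Rightarrow> 'v \<Rightarrow> 'v) \<Rightarrow> ('v \<Rightarrow> 'v) \<Rightarrow> bool" where
  "lie_involution scale br \<sigma> \<longleftrightarrow> Vector_Spaces.linear scale scale \<sigma> \<and>
     (\<forall>x y. \<sigma> (br x y) = br (\<sigma> x) (\<sigma> y)) \<and> (\<forall>x. \<sigma> (\<sigma> x) = x)"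

definition gij :: "('v::ab_group_add \<Rightarrow> 'v) \<Rightarrow> ('v \<Rightarrow> 'v) \<Rightarrow> nat \<Rightarrow> nat \<Rightarrow> 'v set" where
  "gij \<sigma>1 \<sigma>2 i j = {x. \<sigma>1 x = (if i = 0 then x else - x) \<and> \<sigma>2 x = (if j = 0 then x else - x)}"

end

theory Submission
  imports Defs
begin

text \<open>
  Brackets respect the \<open>\<int>/2 \<times> \<int>/2\<close>-grading by the joint eigenspaces, so
  \<open>[g\<^sub>0\<^sub>1, g\<^sub>1\<^sub>0] \<subseteq> g\<^sub>1\<^sub>1 = 0\<close>. By the Jacobi identity an element commuting with a set
  commutes with its derived set, hence \<open>g\<^sub>0\<^sub>1\<close> commutes with \<open>m\<^sub>1\<^sub>0\<close>, \<open>g\<^sub>1\<^sub>0\<close> with \<open>m\<^sub>0\<^sub>1\<close>,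
  and then \<open>m\<^sub>0\<^sub>1\<close> with \<open>m\<^sub>1\<^sub>0\<close>. Now \<open>g = g\<^sub>0\<^sub>0 \<oplus> g\<^sub>0\<^sub>1 \<oplus> g\<^sub>1\<^sub>0\<close> and \<open>g\<^sub>0\<^sub>0\<close> normalises
  every \<open>m\<^sub>i\<^sub>j \<subseteq> g\<^sub>0\<^sub>0\<close>, so \<open>m\<^sub>1\<^sub>0 \<oplus> g\<^sub>1\<^sub>0\<close> is an ideal and \<open>m\<^sub>0\<^sub>1 \<inter> m\<^sub>1\<^sub>0\<close> is an abelian
  ideal, which vanishes by semisimplicity. The same decomposition gives \<open>ad a \<circ> ad b = 0\<close>
  for \<open>a \<in> m\<^sub>0\<^sub>1\<close>, \<open>b \<in> m\<^sub>1\<^sub>0\<close>, so \<open>\<kappa>(a, b) = 0\<close>. Exchanging \<open>\<sigma>\<^sub>1\<close> and \<open>\<sigma>\<^sub>2\<close> turns each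
  statement about \<open>10\<close> into the one about \<open>01\<close>.
\<close>

lemma gij_swap: "gij \<sigma>2 \<sigma>1 i j = gij \<sigma>1 \<sigma>2 j i"
  unfolding gij_def by blast

lemma gij_if_zero_one [simp]:
  "gij \<sigma>1 \<sigma>2 (if i = 0 then 0 else 1) (if j = 0 then 0 else 1) = gij \<sigma>1 \<sigma>2 i j"
  unfolding gij_def by simp

locale lie_alg =
  fixes scale :: "'k::field \<Rightarrow> 'v::ab_group_add \<Rightarrow> 'v"
    and br :: "'v \<Rightarrow> 'v \<Rightarrow> 'v"
  assumes lie_algebra: "lie_algebra scale br"
begin

sublocale vector_space scale
  using lie_algebra unfolding lie_algebra_def by blast

lemma br_add_left: "br (x + y) z = br x z + br y z"
  and br_add_right: "br x (y + z) = br x y + br x z"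
  and br_scale_right: "br x (scale c y) = scale c (br x y)"
  and br_self [simp]: "br x x = 0"
  and jacobi: "br x (br y z) + br y (br z x) + br z (br x y) = 0"
  using lie_algebra unfolding lie_algebra_def by blast+

lemma br_zero_left [simp]: "br 0 y = 0"
  using br_add_left[of 0 0 y] by simp

lemma br_zero_right [simp]: "br x 0 = 0"
  using br_add_right[of x 0 0] by simp

lemma br_anticomm: "br x y = - br y x"
  using br_self[of "x + y"] unfolding br_add_left br_add_right
  by (simp add: eq_neg_iff_add_eq_0 add.commute)

lemma br_minus_right [simp]: "br x (- y) = - br x y"
  using br_add_right[of x y "- y"] by (simp add: eq_neg_iff_add_eq_0 add.commute)

lemma br_minus_left [simp]: "br (- x) y = - br x y"
  using br_add_left[of x "- x" y] by (simp add: eq_neg_iff_add_eq_0 add.commute)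

lemma br_derivation: "br x (br y z) = br (br x y) z + br y (br x z)"
proof -
  have "br x (br y z) = - (br y (br z x) + br z (br x y))"
    using jacobi[of x y z] by (simp only: add.assoc add_eq_0_iff2)
  also have "br y (br z x) = - br y (br x z)"
    using br_anticomm[of z x] by simp
  also have "br z (br x y) = - br (br x y) z"
    by (rule br_anticomm)
  finally show ?thesis
    by (simp add: add.commute)
qed

lemma br_span_in_subspace:
  assumes "a \<in> span S" and "subspace W" and "\<And>s. s \<in> S \<Longrightarrow> br x s \<in> W"
  shows "br x a \<in> W"
proof -
  have "subspace {a. br x a \<in> W}"
    using \<open>subspace W\<close> unfolding subspace_def by (auto simp: br_add_right br_scale_right)
  then have "span S \<subseteq> {a. br x a \<in> W}"
    using assms(3) by (intro span_minimal) auto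
  then show ?thesis
    using assms(1) by blast
qed

lemma br_in_brk_set: "a \<in> A \<Longrightarrow> b \<in> B \<Longrightarrow> br a b \<in> brk_set scale br A B"
  unfolding brk_set_def by (intro span_base) blast

lemma subspace_brk_set: "subspace (brk_set scale br A B)"
  unfolding brk_set_def by simp

lemma brk_set_eq_0:
  assumes "\<And>a b. a \<in> A \<Longrightarrow> b \<in> B \<Longrightarrow> br a b = 0"
  shows "brk_set scale br A B = {0}"
proof -
  have "span {br a b | a b. a \<in> A \<and> b \<in> B} \<subseteq> {0}"
    using assms by (intro span_minimal) auto
  then show ?thesis
    unfolding brk_set_def using span_zero by blast
qed

lemma br_brk_set_eq_0:
  assumes "\<And>s. s \<in> S \<Longrightarrow> br x s = 0" and "a \<in> brk_set scale br S S"
  shows "br x a = 0"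
proof -
  have "br x a \<in> {0}"
  proof (rule br_span_in_subspace)
    show "a \<in> span {br c d | c d. c \<in> S \<and> d \<in> S}"
      using assms(2) unfolding brk_set_def .
  next
    fix s assume "s \<in> {br c d | c d. c \<in> S \<and> d \<in> S}"
    then obtain c d where "s = br c d" "c \<in> S" "d \<in> S"
      by blast
    then show "br x s \<in> {0}"
      using assms(1) br_derivation[of x c d] by simp
  qed simp
  then show ?thesis
    by simp
qed

lemma br_brk_set_closed:
  assumes "\<And>s. s \<in> S \<Longrightarrow> br x s \<in> S" and "a \<in> brk_set scale br S S"
  shows "br x a \<in> brk_set scale br S S"
  using assms(2) unfolding brk_set_def
proof (rule br_span_in_subspace)
  fix s assume "s \<in> {br c d | c d. c \<in> S \<and> d \<in> S}"
  then obtain c d where "s = br c d" "c \<in> S" "d \<in> S"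
    by blast
  then show "br x s \<in> span {br c d | c d. c \<in> S \<and> d \<in> S}"
    using assms(1) br_derivation[of x c d] br_in_brk_set[unfolded brk_set_def]
    by (simp add: span_add)
qed simp

lemma abelian_ideal_eq_0:
  assumes "semisimple scale br" and "lie_ideal scale br I"
    and "\<And>a b. a \<in> I \<Longrightarrow> b \<in> I \<Longrightarrow> br a b = 0"
  shows "I = {0}"
proof -
  have "derived scale br I 1 = {0}"
    using brk_set_eq_0[of I I] assms(3) by simp
  then have "solvable_set scale br I"
    unfolding solvable_set_def by blast
  then show ?thesis
    using assms(1,2) unfolding semisimple_def by blast
qed

lemma killing_eq_0_if_ad_ad_eq_0:
  assumes "\<And>z. br a (br b z) = 0"
  shows "killing scale br a b = 0"
  unfolding killing_def trace_lin_def Let_def assms by (simp add: representation_zero)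

end

locale commuting_involutions = lie_alg scale br
  for scale :: "'k::field_char_0 \<Rightarrow> 'v::ab_group_add \<Rightarrow> 'v" and br +
  fixes \<sigma>1 \<sigma>2 :: "'v \<Rightarrow> 'v"
  assumes involution1: "lie_involution scale br \<sigma>1"
    and involution2: "lie_involution scale br \<sigma>2"
    and involutions_commute: "\<sigma>1 \<circ> \<sigma>2 = \<sigma>2 \<circ> \<sigma>1"
begin

sublocale \<sigma>1: Vector_Spaces.linear scale scale \<sigma>1
  using involution1 unfolding lie_involution_def by blast

sublocale \<sigma>2: Vector_Spaces.linear scale scale \<sigma>2
  using involution2 unfolding lie_involution_def by blast

abbreviation G :: "nat \<Rightarrow> nat \<Rightarrow> 'v set" where
  "G i j \<equiv> gij \<sigma>1 \<sigma>2 i j"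

abbreviation M :: "nat \<Rightarrow> nat \<Rightarrow> 'v set" where
  "M i j \<equiv> brk_set scale br (G i j) (G i j)"

lemma scale_half_double: "scale (1/2) (x + x) = x"
proof -
  have "scale (1/2) (x + x) = scale (1/2 + 1/2) x"
    by (simp only: scale_left_distrib scale_right_distrib)
  then show ?thesis
    by simp
qed

lemma double_eq_0_iff [simp]: "x + x = 0 \<longleftrightarrow> (x::'v) = 0"
  using scale_half_double[of x] by auto

definition plus_part :: "('v \<Rightarrow> 'v) \<Rightarrow> 'v \<Rightarrow> 'v" where
  "plus_part \<tau> x = scale (1/2) (x + \<tau> x)"

definition minus_part :: "('v \<Rightarrow> 'v) \<Rightarrow> 'v \<Rightarrow> 'v" where
  "minus_part \<tau> x = scale (1/2) (x - \<tau> x)"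

lemma plus_part_add_minus_part: "plus_part \<tau> x + minus_part \<tau> x = x"
proof -
  have "plus_part \<tau> x + minus_part \<tau> x = scale (1/2) (x + x)"
    unfolding plus_part_def minus_part_def scale_right_distrib[symmetric] by simp
  then show ?thesis
    by (simp only: scale_half_double)
qed

context
  fixes \<tau> :: "'v \<Rightarrow> 'v"
  assumes \<tau>: "lie_involution scale br \<tau>"
begin

interpretation \<tau>: Vector_Spaces.linear scale scale \<tau>
  using \<tau> unfolding lie_involution_def by blast

lemma involution_plus_part: "\<tau> (plus_part \<tau> x) = plus_part \<tau> x"
  using \<tau> unfolding plus_part_def lie_involution_def by (simp add: \<tau>.add \<tau>.scale add.commute)

lemma involution_minus_part: "\<tau> (minus_part \<tau> x) = - minus_part \<tau> x"
  using \<tau> unfolding minus_part_def lie_involution_def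
  by (simp add: \<tau>.diff \<tau>.scale flip: scale_minus_right)

lemma plus_part_uminus: "plus_part \<tau> (- x) = - plus_part \<tau> x"
  unfolding plus_part_def by (simp add: \<tau>.neg flip: scale_minus_right)

lemma minus_part_uminus: "minus_part \<tau> (- x) = - minus_part \<tau> x"
  unfolding minus_part_def by (simp add: \<tau>.neg flip: scale_minus_right)

end

context
  fixes \<tau> \<rho> :: "'v \<Rightarrow> 'v"
  assumes \<rho>: "lie_involution scale br \<rho>" and commute: "\<tau> \<circ> \<rho> = \<rho> \<circ> \<tau>"
begin

interpretation \<rho>: Vector_Spaces.linear scale scale \<rho>
  using \<rho> unfolding lie_involution_def by blast

lemma commute_plus_part: "\<rho> (plus_part \<tau> x) = plus_part \<tau> (\<rho> x)"
  unfolding plus_part_def using commute by (simp add: \<rho>.add \<rho>.scale fun_eq_iff)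

lemma commute_minus_part: "\<rho> (minus_part \<tau> x) = minus_part \<tau> (\<rho> x)"
  unfolding minus_part_def using commute by (simp add: \<rho>.diff \<rho>.scale fun_eq_iff)

end

lemma gij_decomposition:
  "\<exists>a b c d. x = a + b + c + d \<and> a \<in> G 0 0 \<and> b \<in> G 0 1 \<and> c \<in> G 1 0 \<and> d \<in> G 1 1"
proof (intro exI conjI)
  let ?e = "plus_part \<sigma>1 x" and ?o = "minus_part \<sigma>1 x"
  have \<sigma>1_e: "\<sigma>1 ?e = ?e" and \<sigma>1_o: "\<sigma>1 ?o = - ?o"
    using involution_plus_part involution_minus_part involution1 by blast+
  note commute = commute_plus_part[OF involution1] commute_minus_part[OF involution1]
  note plus2 = involution_plus_part[OF involution2] plus_part_uminus[OF involution2]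
  note minus2 = involution_minus_part[OF involution2] minus_part_uminus[OF involution2]
  have "\<sigma>2 \<circ> \<sigma>1 = \<sigma>1 \<circ> \<sigma>2"
    using involutions_commute by simp
  then show "plus_part \<sigma>2 ?e \<in> G 0 0" "minus_part \<sigma>2 ?e \<in> G 0 1"
    "plus_part \<sigma>2 ?o \<in> G 1 0" "minus_part \<sigma>2 ?o \<in> G 1 1"
    unfolding gij_def by (simp_all add: commute \<sigma>1_e \<sigma>1_o plus2 minus2)
  show "x = plus_part \<sigma>2 ?e + minus_part \<sigma>2 ?e + plus_part \<sigma>2 ?o + minus_part \<sigma>2 ?o"
    by (simp add: add.assoc plus_part_add_minus_part)
qed

lemma subspace_gij: "subspace (G i j)"
  unfolding subspace_def gij_def by (auto simp: \<sigma>1.add \<sigma>1.scale \<sigma>2.add \<sigma>2.scale)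

lemma br_gij:
  assumes "x \<in> G i j" and "y \<in> G k l"
  shows "br x y \<in> G (if (i = 0) = (k = 0) then 0 else 1) (if (j = 0) = (l = 0) then 0 else 1)"
  using assms involution1 involution2 unfolding gij_def lie_involution_def by auto

lemma gij_00_inter:
  assumes "i \<noteq> 0 \<or> j \<noteq> 0"
  shows "G 0 0 \<inter> G i j = {0}"
proof -
  have "x = 0" if "x \<in> G 0 0" "x \<in> G i j" for x
    using that assms unfolding gij_def by (auto simp: eq_neg_iff_add_eq_0)
  then show ?thesis
    using subspace_0[OF subspace_gij] by blast
qed

lemma gij_sum_eq_0:
  assumes "a \<in> G 0 0" "b \<in> G 0 1" "c \<in> G 1 0" and "a + b + c = 0"
  shows "a = 0 \<and> b = 0 \<and> c = 0"
proof -
  have "a + b - c = 0"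
    using arg_cong[OF assms(4), of \<sigma>1] assms(1-3) unfolding gij_def by (simp add: \<sigma>1.add)
  moreover have "c + c = (a + b + c) - (a + b - c)"
    by (simp add: algebra_simps)
  ultimately have "c = 0"
    using assms(4) by simp
  have "a - b + c = 0"
    using arg_cong[OF assms(4), of \<sigma>2] assms(1-3) unfolding gij_def by (simp add: \<sigma>2.add)
  moreover have "b + b = (a + b + c) - (a - b + c)"
    by (simp add: algebra_simps)
  ultimately have "b = 0"
    using assms(4) by simp
  with \<open>c = 0\<close> show ?thesis
    using assms(4) by simp
qed

lemma M_subset_G00: "M i j \<subseteq> G 0 0"
  unfolding brk_set_def
proof (rule span_minimal)
  show "{br a b | a b. a \<in> G i j \<and> b \<in> G i j} \<subseteq> G 0 0"
    using br_gij[of _ i j _ i j] by auto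
qed (rule subspace_gij)

lemma br_G00_M:
  assumes "x \<in> G 0 0" and "a \<in> M i j"
  shows "br x a \<in> M i j"
proof (rule br_brk_set_closed[OF _ assms(2)])
  show "br x s \<in> G i j" if "s \<in> G i j" for s
    using br_gij[OF assms(1) that] by simp
qed

lemma M_inter_gij:
  assumes "i \<noteq> 0 \<or> j \<noteq> 0"
  shows "M k l \<inter> G i j = {0}"
  using gij_00_inter[OF assms] M_subset_G00 subspace_0[OF subspace_brk_set] by blast

end

locale commuting_involutions_g11 = commuting_involutions +
  assumes gij_11: "gij \<sigma>1 \<sigma>2 1 1 = {0}"

sublocale commuting_involutions_g11 \<subseteq> swap: commuting_involutions_g11 scale br \<sigma>2 \<sigma>1
  rewrites "\<And>i j. gij \<sigma>2 \<sigma>1 i j = gij \<sigma>1 \<sigma>2 j i"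
  by unfold_locales
    (use involution1 involution2 involutions_commute gij_11 in \<open>simp_all add: gij_swap\<close>)

context commuting_involutions_g11
begin

lemma br_G01_G10: "x \<in> G 0 1 \<Longrightarrow> y \<in> G 1 0 \<Longrightarrow> br x y = 0"
  using br_gij[of x 0 1 y 1 0] gij_11 by simp

lemma gij_decomposition_g11:
  obtains a b c where "x = a + b + c" "a \<in> G 0 0" "b \<in> G 0 1" "c \<in> G 1 0"
  using gij_decomposition[of x] gij_11 by auto

lemma br_G01_M10:
  assumes "y \<in> G 0 1" and "a \<in> M 1 0"
  shows "br y a = 0"
  using br_brk_set_eq_0[OF _ assms(2)] br_G01_G10[OF assms(1)] by blast

lemma brk_set_M10_G01: "brk_set scale br (M 1 0) (G 0 1) = {0}"
proof (rule brk_set_eq_0)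
  show "br a y = 0" if "a \<in> M 1 0" and "y \<in> G 0 1" for a y
    using br_G01_M10[OF that(2,1)] br_anticomm[of a y] by simp
qed

lemma lie_ideal_M10_plus_G10: "lie_ideal scale br {a + b | a b. a \<in> M 1 0 \<and> b \<in> G 1 0}"
  unfolding lie_ideal_def
proof (intro conjI allI impI)
  show "subspace {a + b | a b. a \<in> M 1 0 \<and> b \<in> G 1 0}"
    by (intro subspace_sums subspace_gij subspace_brk_set)
next
  fix x i assume "i \<in> {a + b | a b. a \<in> M 1 0 \<and> b \<in> G 1 0}"
  then obtain a b where i: "i = a + b" and a: "a \<in> M 1 0" and b: "b \<in> G 1 0"
    by blast
  obtain p q r where x: "x = p + q + r" and p: "p \<in> G 0 0" and q: "q \<in> G 0 1" and r: "r \<in> G 1 0"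
    by (rule gij_decomposition_g11)
  have "a \<in> G 0 0"
    using a M_subset_G00 by blast
  then have "br p b \<in> G 1 0" "br r a \<in> G 1 0"
    using br_gij[OF p b] br_gij[OF r \<open>a \<in> G 0 0\<close>] by simp_all
  then have "br p b + br r a \<in> G 1 0"
    by (rule subspace_add[OF subspace_gij])
  moreover have "br p a + br r b \<in> M 1 0"
    using br_G00_M[OF p a] br_in_brk_set[OF r b] subspace_add[OF subspace_brk_set] by blast
  moreover have "br x i = (br p a + br r b) + (br p b + br r a)"
    unfolding x i br_add_left br_add_right br_G01_M10[OF q a] br_G01_G10[OF q b]
    by (simp add: ac_simps)
  ultimately show "br x i \<in> {a + b | a b. a \<in> M 1 0 \<and> b \<in> G 1 0}"
    by blast
qed

end

(* Reopened so that the swap instances of the lemmas above are available. *)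
context commuting_involutions_g11
begin

lemma br_M01_M10:
  assumes "a \<in> M 0 1" and "b \<in> M 1 0"
  shows "br a b = 0"
proof (rule br_brk_set_eq_0[OF _ assms(2)])
  show "br a s = 0" if "s \<in> G 1 0" for s
    using swap.br_G01_M10[OF that assms(1)] br_anticomm[of a s] by simp
qed

lemma lie_ideal_M01_inter_M10: "lie_ideal scale br (M 0 1 \<inter> M 1 0)"
  unfolding lie_ideal_def
proof (intro conjI allI impI)
  show "subspace (M 0 1 \<inter> M 1 0)"
    by (intro subspace_inter subspace_brk_set)
next
  fix x k assume k: "k \<in> M 0 1 \<inter> M 1 0"
  obtain p q r where x: "x = p + q + r" and p: "p \<in> G 0 0" and q: "q \<in> G 0 1" and r: "r \<in> G 1 0"
    by (rule gij_decomposition_g11)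
  have "br p k \<in> M 0 1 \<inter> M 1 0"
    using br_G00_M[OF p] k by blast
  moreover have "br q k = 0" "br r k = 0"
    using br_G01_M10[OF q] swap.br_G01_M10[OF r] k by blast+
  ultimately show "br x k \<in> M 0 1 \<inter> M 1 0"
    unfolding x br_add_left by simp
qed

lemma M01_inter_M10:
  assumes "semisimple scale br"
  shows "M 0 1 \<inter> M 1 0 = {0}"
  using abelian_ideal_eq_0[OF assms lie_ideal_M01_inter_M10] br_M01_M10 by blast

lemma killing_M01_M10:
  assumes a: "a \<in> M 0 1" and b: "b \<in> M 1 0"
  shows "killing scale br a b = 0"
proof (rule killing_eq_0_if_ad_ad_eq_0)
  fix z
  obtain p q r where z: "z = p + q + r" and p: "p \<in> G 0 0" and q: "q \<in> G 0 1" and r: "r \<in> G 1 0"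
    by (rule gij_decomposition_g11)
  have "- br p b \<in> M 1 0"
    using br_G00_M[OF p b] by (rule subspace_neg[OF subspace_brk_set])
  then have "br a (br b p) = 0"
    using br_M01_M10[OF a] br_anticomm[of b p] by metis
  moreover have "br b q = 0"
    using br_G01_M10[OF q b] by (simp add: br_anticomm[of b q])
  moreover have "b \<in> G 0 0"
    using b M_subset_G00 by blast
  then have "br b r \<in> G 1 0"
    using br_gij[OF \<open>b \<in> G 0 0\<close> r] by simp
  then have "br a (br b r) = 0"
    using swap.br_G01_M10[OF _ a] by (simp add: br_anticomm[of a "br b r"])
  ultimately show "br a (br b z) = 0"
    unfolding z br_add_right by simp
qed

lemma M10_plus_G10_inter_M01_plus_G01:
  assumes "semisimple scale br"
  shows "{a + b | a b. a \<in> M 1 0 \<and> b \<in> G 1 0} \<inter> {a + b | a b. a \<in> M 0 1 \<and> b \<in> G 0 1} = {0}"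
proof
  have "0 + 0 \<in> {a + b | a b. a \<in> M k l \<and> b \<in> G k l}" for k l
    using subspace_0[OF subspace_brk_set] subspace_0[OF subspace_gij] by blast
  then show "{0} \<subseteq> {a + b | a b. a \<in> M 1 0 \<and> b \<in> G 1 0} \<inter> {a + b | a b. a \<in> M 0 1 \<and> b \<in> G 0 1}"
    by simp
next
  show "{a + b | a b. a \<in> M 1 0 \<and> b \<in> G 1 0} \<inter> {a + b | a b. a \<in> M 0 1 \<and> b \<in> G 0 1} \<subseteq> {0}"
  proof
    fix z assume "z \<in> {a + b | a b. a \<in> M 1 0 \<and> b \<in> G 1 0} \<inter> {a + b | a b. a \<in> M 0 1 \<and> b \<in> G 0 1}"
    then obtain a b a' b' where z: "z = a + b" "z = a' + b'" and a: "a \<in> M 1 0" and b: "b \<in> G 1 0"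
      and a': "a' \<in> M 0 1" and b': "b' \<in> G 0 1"
      by blast
    have "a \<in> G 0 0" "a' \<in> G 0 0"
      using a a' M_subset_G00 by blast+
    then have "a - a' \<in> G 0 0"
      by (rule subspace_diff[OF subspace_gij])
    moreover have "- b' \<in> G 0 1"
      using b' by (rule subspace_neg[OF subspace_gij])
    moreover have "(a - a') + (- b') + b = 0"
      using z by (simp add: algebra_simps)
    ultimately have "a - a' = 0" "b = 0"
      using gij_sum_eq_0[OF _ _ b] by blast+
    then have "a \<in> M 0 1 \<inter> M 1 0"
      using a a' by simp
    then have "a = 0"
      unfolding M01_inter_M10[OF assms] by simp
    then show "z \<in> {0}"
      using z(1) \<open>b = 0\<close> by simp
  qed
qed

end

theorem lemma3p1:
  fixes scale :: "'k::field_char_0 \<Rightarrow> 'v::ab_group_add \<Rightarrow> 'v"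
    and br :: "'v \<Rightarrow> 'v \<Rightarrow> 'v"
    and \<sigma>1 \<sigma>2 :: "'v \<Rightarrow> 'v"
  assumes "alg_closed TYPE('k)"
    and "semisimple scale br"
    and "lie_involution scale br \<sigma>1" and "lie_involution scale br \<sigma>2"
    and "\<sigma>1 \<noteq> \<sigma>2"
    and "\<sigma>1 \<circ> \<sigma>2 = \<sigma>2 \<circ> \<sigma>1"
    and "gij \<sigma>1 \<sigma>2 1 1 = {0}"
  shows "let g01 = gij \<sigma>1 \<sigma>2 0 1; g10 = gij \<sigma>1 \<sigma>2 1 0;
             m01 = brk_set scale br g01 g01; m10 = brk_set scale br g10 g10;
             I10 = {a + b | a b. a \<in> m10 \<and> b \<in> g10};
             I01 = {a + b | a b. a \<in> m01 \<and> b \<in> g01}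
         in brk_set scale br m01 g10 = {0} \<and> brk_set scale br m10 g01 = {0}
          \<and> (\<forall>a\<in>m01. \<forall>b\<in>m10. killing scale br a b = 0)
          \<and> m01 \<inter> m10 = {0}
          \<and> m10 \<inter> g10 = {0} \<and> m01 \<inter> g01 = {0}
          \<and> lie_ideal scale br I10 \<and> lie_ideal scale br I01
          \<and> I10 \<inter> I01 = {0}"
proof -
  have "lie_algebra scale br"
    using \<open>semisimple scale br\<close> unfolding semisimple_def by blast
  then interpret commuting_involutions_g11 scale br \<sigma>1 \<sigma>2
    by unfold_locales (use assms in blast)+
  show ?thesis
    unfolding Let_def
    using swap.brk_set_M10_G01 brk_set_M10_G01 killing_M01_M10 M01_inter_M10[OF assms(2)]
      M_inter_gij[of 1 0 1 0] M_inter_gij[of 0 1 0 1]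
      lie_ideal_M10_plus_G10 swap.lie_ideal_M10_plus_G10 M10_plus_G10_inter_M01_plus_G01[OF assms(2)]
    by simp
qed

end
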